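(* Let $A$ be a finite alphabet and let $Z\subseteq A^+$ be a code such that $Z=XY$ for some non-empty $X,Y\subseteq A^+$. If $|X|=2$ or $|Y|=2$, then $Z$ is an alt-induced code.
   Context: $A^+$ is the set of non-empty words over $A$; $XY=\{xy:x\in X,y\in Y\}$. A set $Z\subseteq A^+$ is a code if every word admits at most one factorization into words of $Z$. For non-empty $X,Y\subseteq A^+$, $(X,Y)$ is an alternative code if no word of $A^+$ admits two different similar alternative factorizations on $(X,Y)$ (factorizations $u_1\cdots u_n$, $n\ge2$, $u_i\in X\cup Y$, alternating between $X$ and $Y$; similar = beginning in the same set and ending in the same set); equivalently, $XY$ is a code and the product $XY$ is unambiguous (each element of $XY$ has exactly one factorization $xy$ with $x\in X,y\in Y$). $Z$ is an alt-induced code if $Z=XY$ for some alternative code $(X,Y)$. *)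

theory Defs
  imports Main
begin

definition plus_words :: "'a set \<Rightarrow> 'a list set" where
  "plus_words A = lists A - {[]}"

definition conc :: "'a list set \<Rightarrow> 'a list set \<Rightarrow> 'a list set" where
  "conc X Y = {x @ y | x y. x \<in> X \<and> y \<in> Y}"

definition is_code :: "'a list set \<Rightarrow> bool" where
  "is_code Z \<longleftrightarrow> (\<forall>us vs. set us \<subseteq> Z \<longrightarrow> set vs \<subseteq> Z \<longrightarrow> concat us = concat vs \<longrightarrow> us = vs)"

text \<open>The boolean b records the starting set (True = X, False = Y);
the i-th factor (0-based) lies in X iff (even i = b).\<close>
definition alt_fact :: "'a list set \<Rightarrow> 'a list set \<Rightarrow> bool \<Rightarrow> 'a list list \<Rightarrow> bool" where
  "alt_fact X Y b us \<longleftrightarrow> length us \<ge> 2 \<and>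
     (\<forall>i < length us. us ! i \<in> (if (even i = b) then X else Y))"

text \<open>Starting set and ending set of an alternative factorization (True = X, False = Y).\<close>
definition alt_end :: "bool \<Rightarrow> 'a list list \<Rightarrow> bool" where
  "alt_end b us = (even (length us - 1) = b)"

definition alt_code :: "'a set \<Rightarrow> 'a list set \<Rightarrow> 'a list set \<Rightarrow> bool" where
  "alt_code A X Y \<longleftrightarrow> X \<noteq> {} \<and> Y \<noteq> {} \<and> X \<subseteq> plus_words A \<and> Y \<subseteq> plus_words A \<and>
     (\<forall>b c us vs. alt_fact X Y b us \<longrightarrow> alt_fact X Y c vs \<longrightarrow> concat us = concat vs \<longrightarrow>
        b = c \<longrightarrow> alt_end b us = alt_end c vs \<longrightarrow> us = vs)"

definition alt_induced_code :: "'a set \<Rightarrow> 'a list set \<Rightarrow> bool" where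
  "alt_induced_code A Z \<longleftrightarrow> (\<exists>X Y. alt_code A X Y \<and> Z = conc X Y)"

end

theory Submission
  imports Defs "HOL-Library.Sublist"
begin

text \<open>
  (X, Y) is an alternative code as soon as XY is a code and the product XY is unambiguous:
  padding two similar alternative factorizations by the same fixed x0 \<in> X in front and
  y0 \<in> Y at the back turns both into factorizations over XY, which coincide.
  If X = {x1, x2} and neither word is a prefix of the other, XY is unambiguous. Otherwise
  X = {x, xu} and XY = {x}(Y \<union> uY), a product with a singleton left factor, hence unambiguous.
  The case |Y| = 2 is symmetric, with suffixes.
\<close>

fun alternating :: "'a set \<Rightarrow> 'a set \<Rightarrow> 'a list \<Rightarrow> bool" where
  "alternating X Y [] \<longleftrightarrow> True"
| "alternating X Y (u # us) \<longleftrightarrow> u \<in> X \<and> alternating Y X us"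

definition unambiguous_conc :: "'a list set \<Rightarrow> 'a list set \<Rightarrow> bool" where
  "unambiguous_conc X Y \<longleftrightarrow> inj_on (\<lambda>(x, y). x @ y) (X \<times> Y)"

lemma alternating_iff_nth:
  "alternating X Y us \<longleftrightarrow> (\<forall>i < length us. us ! i \<in> (if even i then X else Y))"
  by (induction us arbitrary: X Y) (auto simp: nth_Cons less_Suc_eq_0_disj split: nat.split)

lemma alternating_append:
  "alternating X Y (us @ vs) \<longleftrightarrow>
     alternating X Y us \<and> (if even (length us) then alternating X Y vs else alternating Y X vs)"
  by (induction us arbitrary: X Y) auto

lemma alternating_if_alt_fact:
  assumes "alt_fact X Y b us"
  shows "alternating (if b then X else Y) (if b then Y else X) us"
  using assms unfolding alt_fact_def alternating_iff_nth by auto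

lemma alternating_even_imp_pairs:
  assumes "alternating X Y us" "even (length us)"
  shows "\<exists>ps \<in> lists (X \<times> Y). us = concat (map (\<lambda>(x, y). [x, y]) ps)"
  using assms
proof (induction us rule: induct_list012)
  case (3 x y zs)
  then obtain ps where "ps \<in> lists (X \<times> Y)" "zs = concat (map (\<lambda>(x, y). [x, y]) ps)"
    by auto
  with "3.prems" show ?case by (intro bexI[of _ "(x, y) # ps"]) auto
qed (auto intro: bexI[of _ "[]"])

lemma alternating_even_eq_if_code:
  assumes "is_code (conc X Y)" "unambiguous_conc X Y"
    and "alternating X Y us" "even (length us)"
    and "alternating X Y vs" "even (length vs)"
    and "concat us = concat vs"
  shows "us = vs"
proof -
  let ?pair = "\<lambda>(x, y). [x, y]" and ?cat = "\<lambda>(x, y). x @ y"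
  obtain ps qs where ps: "ps \<in> lists (X \<times> Y)" "us = concat (map ?pair ps)"
    and qs: "qs \<in> lists (X \<times> Y)" "vs = concat (map ?pair qs)"
    using alternating_even_imp_pairs assms(3-6) by metis
  have concat_pairs: "concat (concat (map ?pair rs)) = concat (map ?cat rs)" for rs
    by (induction rs) auto
  have "set (map ?cat rs) \<subseteq> conc X Y" if "rs \<in> lists (X \<times> Y)" for rs
    using that by (auto simp: conc_def)
  with ps qs assms(1,7) concat_pairs have "map ?cat ps = map ?cat qs"
    unfolding is_code_def by metis
  moreover have "inj_on ?cat (set ps \<union> set qs)"
    using assms(2) ps(1) qs(1) unfolding unambiguous_conc_def
    by (auto intro: inj_on_subset)
  ultimately show ?thesis
    using ps(2) qs(2) map_inj_on by metis
qed

lemma alt_fact_padded: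
  assumes "alt_fact X Y b us" "x0 \<in> X" "y0 \<in> Y"
  defines "padded \<equiv> (if b then [] else [x0]) @ us @ (if alt_end b us then [y0] else [])"
  shows "alternating X Y padded \<and> even (length padded)"
proof -
  have "length us \<ge> 2" using assms(1) by (simp add: alt_fact_def)
  moreover have "alternating X Y ((if b then [] else [x0]) @ us)"
    using alternating_if_alt_fact[OF assms(1)] assms(2) by auto
  ultimately show ?thesis
    using assms(3) unfolding padded_def alt_end_def
    by (cases b) (auto simp: alternating_append)
qed

lemma alt_code_if_code_unambiguous:
  assumes "X \<noteq> {}" "Y \<noteq> {}" "X \<subseteq> plus_words A" "Y \<subseteq> plus_words A"
    and "is_code (conc X Y)" "unambiguous_conc X Y"
  shows "alt_code A X Y"
  unfolding alt_code_def
proof (intro conjI assms allI impI)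
  fix b c and us vs :: "'a list list"
  assume facts: "alt_fact X Y b us" "alt_fact X Y c vs"
    and "concat us = concat vs" "b = c" "alt_end b us = alt_end c vs"
  obtain x0 y0 where "x0 \<in> X" "y0 \<in> Y" using assms(1,2) by blast
  define pre where "pre = (if b then [] else [x0])"
  define post where "post = (if alt_end b us then [y0] else [])"
  have "alternating X Y (pre @ us @ post)" "even (length (pre @ us @ post))"
    and "alternating X Y (pre @ vs @ post)" "even (length (pre @ vs @ post))"
    using alt_fact_padded[OF facts(1) \<open>x0 \<in> X\<close> \<open>y0 \<in> Y\<close>]
      alt_fact_padded[OF facts(2) \<open>x0 \<in> X\<close> \<open>y0 \<in> Y\<close>] \<open>b = c\<close> \<open>alt_end b us = alt_end c vs\<close>
    unfolding pre_def post_def by auto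
  moreover have "concat (pre @ us @ post) = concat (pre @ vs @ post)"
    using \<open>concat us = concat vs\<close> by simp
  ultimately have "pre @ us @ post = pre @ vs @ post"
    by (rule alternating_even_eq_if_code[OF assms(5,6)])
  then show "us = vs" by simp
qed

lemma unambiguous_conc_singleton_left: "unambiguous_conc {x} Y"
  by (auto simp: unambiguous_conc_def inj_on_def)

lemma unambiguous_conc_singleton_right: "unambiguous_conc X {y}"
  by (auto simp: unambiguous_conc_def inj_on_def)

lemma unambiguous_conc_if_prefix_free:
  assumes "\<forall>x \<in> X. \<forall>x' \<in> X. prefix x x' \<longrightarrow> x = x'"
  shows "unambiguous_conc X Y"
  unfolding unambiguous_conc_def inj_on_def
proof (clarify)
  fix x y x' y' assume "x \<in> X" "x' \<in> X" and eq: "x @ y = x' @ y'"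
  have "prefix x (x @ y)" by simp
  moreover have "prefix x' (x @ y)" by (simp add: eq)
  ultimately have "prefix x x' \<or> prefix x' x" by (rule prefix_same_cases)
  with assms \<open>x \<in> X\<close> \<open>x' \<in> X\<close> have "x = x'" by blast
  with eq show "x = x' \<and> y = y'" by simp
qed

lemma unambiguous_conc_if_suffix_free:
  assumes "\<forall>y \<in> Y. \<forall>y' \<in> Y. suffix y y' \<longrightarrow> y = y'"
  shows "unambiguous_conc X Y"
  unfolding unambiguous_conc_def inj_on_def
proof (clarify)
  fix x y x' y' assume "y \<in> Y" "y' \<in> Y" and eq: "x @ y = x' @ y'"
  have "suffix y (x @ y)" by (rule suffixI) simp
  moreover have "suffix y' (x @ y)" by (rule suffixI) (simp add: eq)
  ultimately have "suffix y y' \<or> suffix y' y" by (rule suffix_same_cases)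
  with assms \<open>y \<in> Y\<close> \<open>y' \<in> Y\<close> have "y = y'" by blast
  with eq show "x = x' \<and> y = y'" by simp
qed

lemma card_2_prefix_free_or_extension:
  assumes "card X = 2"
  shows "(\<forall>x \<in> X. \<forall>x' \<in> X. prefix x x' \<longrightarrow> x = x') \<or> (\<exists>x u. X = {x, x @ u})"
proof -
  obtain x1 x2 where X: "X = {x1, x2}" using assms card_2_iff by metis
  show ?thesis
  proof (cases "prefix x1 x2 \<or> prefix x2 x1")
    case True
    then show ?thesis unfolding X prefix_def by (metis insert_commute)
  qed (auto simp: X)
qed

lemma card_2_suffix_free_or_extension:
  assumes "card Y = 2"
  shows "(\<forall>y \<in> Y. \<forall>y' \<in> Y. suffix y y' \<longrightarrow> y = y') \<or> (\<exists>y u. Y = {y, u @ y})"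
proof -
  obtain y1 y2 where Y: "Y = {y1, y2}" using assms card_2_iff by metis
  show ?thesis
  proof (cases "suffix y1 y2 \<or> suffix y2 y1")
    case True
    then show ?thesis unfolding Y suffix_def by (metis insert_commute)
  qed (auto simp: Y)
qed

lemma conc_extension_left: "conc {x, x @ u} Y = conc {x} (Y \<union> conc {u} Y)"
  unfolding conc_def by auto (metis append_assoc)

lemma conc_extension_right: "conc X {y, u @ y} = conc (X \<union> conc X {u}) {y}"
  unfolding conc_def by auto (metis append_assoc)

lemma conc_subset_plus_words:
  assumes "X \<subseteq> lists A" "Y \<subseteq> lists A" "X \<subseteq> plus_words A \<or> Y \<subseteq> plus_words A"
  shows "conc X Y \<subseteq> plus_words A"
  using assms unfolding conc_def plus_words_def by (fastforce simp: in_lists_conv_set)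

lemma alt_induced_code_if_card_left_2:
  assumes "card X = 2" "Y \<noteq> {}" "X \<subseteq> plus_words A" "Y \<subseteq> plus_words A"
    and "is_code (conc X Y)"
  shows "alt_induced_code A (conc X Y)"
  using card_2_prefix_free_or_extension[OF assms(1)]
proof
  assume "\<forall>x \<in> X. \<forall>x' \<in> X. prefix x x' \<longrightarrow> x = x'"
  then have "unambiguous_conc X Y" by (rule unambiguous_conc_if_prefix_free)
  moreover have "X \<noteq> {}" using assms(1) by auto
  ultimately have "alt_code A X Y" using assms by (intro alt_code_if_code_unambiguous)
  then show ?thesis unfolding alt_induced_code_def by blast
next
  assume "\<exists>x u. X = {x, x @ u}"
  then obtain x u where X: "X = {x, x @ u}" by blast
  let ?Y' = "Y \<union> conc {u} Y"
  have "?Y' \<subseteq> plus_words A"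
    using assms(3,4) conc_subset_plus_words[of "{u}" A Y] unfolding X plus_words_def by auto
  moreover have "is_code (conc {x} ?Y')"
    using assms(5) unfolding X conc_extension_left .
  ultimately have "alt_code A {x} ?Y'"
    using assms(2,3) unambiguous_conc_singleton_left unfolding X
    by (intro alt_code_if_code_unambiguous) auto
  then show ?thesis unfolding alt_induced_code_def X conc_extension_left by blast
qed

lemma alt_induced_code_if_card_right_2:
  assumes "card Y = 2" "X \<noteq> {}" "X \<subseteq> plus_words A" "Y \<subseteq> plus_words A"
    and "is_code (conc X Y)"
  shows "alt_induced_code A (conc X Y)"
  using card_2_suffix_free_or_extension[OF assms(1)]
proof
  assume "\<forall>y \<in> Y. \<forall>y' \<in> Y. suffix y y' \<longrightarrow> y = y'"
  then have "unambiguous_conc X Y" by (rule unambiguous_conc_if_suffix_free)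
  moreover have "Y \<noteq> {}" using assms(1) by auto
  ultimately have "alt_code A X Y" using assms by (intro alt_code_if_code_unambiguous)
  then show ?thesis unfolding alt_induced_code_def by blast
next
  assume "\<exists>y u. Y = {y, u @ y}"
  then obtain y u where Y: "Y = {y, u @ y}" by blast
  let ?X' = "X \<union> conc X {u}"
  have "?X' \<subseteq> plus_words A"
    using assms(3,4) conc_subset_plus_words[of X A "{u}"] unfolding Y plus_words_def by auto
  moreover have "is_code (conc ?X' {y})"
    using assms(5) unfolding Y conc_extension_right .
  ultimately have "alt_code A ?X' {y}"
    using assms(2,4) unambiguous_conc_singleton_right unfolding Y
    by (intro alt_code_if_code_unambiguous) auto
  then show ?thesis unfolding alt_induced_code_def Y conc_extension_right by blast
qed

theorem mainTheorem3:
  fixes A :: "'a set" and X Y Z :: "'a list set"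
  assumes "finite A"
    and "Z \<subseteq> plus_words A"
    and "is_code Z"
    and "X \<noteq> {}" and "Y \<noteq> {}"
    and "X \<subseteq> plus_words A" and "Y \<subseteq> plus_words A"
    and "Z = conc X Y"
    and "card X = 2 \<or> card Y = 2"
  shows "alt_induced_code A Z"
  using assms alt_induced_code_if_card_left_2[of X Y A] alt_induced_code_if_card_right_2[of Y X A]
  by auto

end
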